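(* For all $\alpha\in(0,1)$ and all integers $s=1,2,3,\dots$, $$\frac{1-\alpha}{(s+1)^\alpha}<a_s<\frac{1-\alpha}{s^\alpha},\qquad \frac{\alpha(1-\alpha)}{(s+2)^{\alpha+1}}<a_s-a_{s+1}<\frac{\alpha(1-\alpha)}{s^{\alpha+1}},\qquad \frac{\alpha(1-\alpha)}{12(s+1)^{\alpha+1}}<b_s<\frac{\alpha(1-\alpha)}{12 s^{\alpha+1}}.$$
   Context: For $l\ge 0$: $a_l=a_l^{(\alpha)}=(l+1)^{1-\alpha}-l^{1-\alpha}$ and $b_l=b_l^{(\alpha)}=\frac{1}{2-\alpha}\left[(l+1)^{2-\alpha}-l^{2-\alpha}\right]-\frac12\left[(l+1)^{1-\alpha}+l^{1-\alpha}\right]$. *)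

theory Defs
  imports Complex_Main
begin

definition a_coef :: "real \<Rightarrow> nat \<Rightarrow> real" where
  "a_coef \<alpha> l = (real l + 1) powr (1 - \<alpha>) - (real l) powr (1 - \<alpha>)"

definition b_coef :: "real \<Rightarrow> nat \<Rightarrow> real" where
  "b_coef \<alpha> l = 1 / (2 - \<alpha>) * ((real l + 1) powr (2 - \<alpha>) - (real l) powr (2 - \<alpha>))
                 - 1 / 2 * ((real l + 1) powr (1 - \<alpha>) + (real l) powr (1 - \<alpha>))"

end

theory Submission
  imports Defs
begin

text \<open>Let \<open>f t = t powr (1 - \<alpha>)\<close>. Then \<open>a s = f (s + 1) - f s\<close>, \<open>a s - a (s + 1)\<close> is minus
  the second difference of \<open>f\<close> at \<open>s\<close>, and \<open>b s\<close> is the error of the trapezoidal rule for the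
  integral of \<open>f\<close> over \<open>[s, s + 1]\<close>. Mean value arguments write these as \<open>f' \<xi>\<close>, \<open>- f'' \<xi>\<close> and
  \<open>- f'' \<xi> / 12\<close> for some \<open>\<xi>\<close> in \<open>(s, s + 1)\<close>, \<open>(s, s + 2)\<close> and \<open>(s, s + 1)\<close> respectively, and
  the six bounds follow because \<open>f' t = (1 - \<alpha>) / t powr \<alpha>\<close> and
  \<open>- f'' t = \<alpha> * (1 - \<alpha>) / t powr (\<alpha> + 1)\<close> are strictly decreasing.\<close>

lemma powr_mean_value:
  fixes x y r :: real
  assumes "0 < x" "x < y"
  obtains z where "x < z" "z < y" "y powr r - x powr r = (y - x) * (r * z powr (r - 1))"
proof -
  have "\<exists>z. x < z \<and> z < y \<and> (\<lambda>t. t powr r) y - (\<lambda>t. t powr r) x = (y - x) * (r * z powr (r - 1))"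
    by (rule MVT2[OF assms(2)], rule has_real_derivative_powr, use assms in auto)
  then show ?thesis using that by auto
qed

lemma powr_second_difference:
  fixes x r :: real
  assumes "0 < x"
  obtains w where "x < w" "w < x + 2"
    "(x + 2) powr r - 2 * (x + 1) powr r + x powr r = r * (r - 1) * w powr (r - 2)"
proof -
  define g where "g t = (t + 1) powr r - t powr r" for t :: real
  have "\<exists>z. x < z \<and> z < x + 1 \<and>
      g (x + 1) - g x = (x + 1 - x) * (r * (z + 1) powr (r - 1) - r * z powr (r - 1))"
    unfolding g_def by (rule MVT2) (use assms in \<open>auto intro!: derivative_eq_intros\<close>)
  then obtain z where z: "x < z" "z < x + 1"
    and dg: "g (x + 1) - g x = r * ((z + 1) powr (r - 1) - z powr (r - 1))"
    by (auto simp: algebra_simps)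
  obtain w where w: "z < w" "w < z + 1"
    and dw: "(z + 1) powr (r - 1) - z powr (r - 1) = (r - 1) * w powr (r - 2)"
    using powr_mean_value[of z "z + 1" "r - 1"] z assms by (auto simp: diff_diff_eq)
  have "(x + 2) powr r - 2 * (x + 1) powr r + x powr r = g (x + 1) - g x"
    by (simp add: g_def add.assoc)
  also have "\<dots> = r * (r - 1) * w powr (r - 2)"
    using dg dw by simp
  finally have "(x + 2) powr r - 2 * (x + 1) powr r + x powr r = r * (r - 1) * w powr (r - 2)" .
  with w z show ?thesis
    by (intro that[of w]) auto
qed

lemma powr_trapezoid_error:
  fixes x r :: real
  assumes "0 < x" "r \<noteq> -1"
  obtains \<eta> where "x < \<eta>" "\<eta> < x + 1"
    "1 / (r + 1) * ((x + 1) powr (r + 1) - x powr (r + 1)) - 1 / 2 * ((x + 1) powr r + x powr r)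
       = - (r * (r - 1) / 12) * \<eta> powr (r - 2)"
proof -
  define E where
    "E = 1 / (r + 1) * ((x + 1) powr (r + 1) - x powr (r + 1)) - 1 / 2 * ((x + 1) powr r + x powr r)"
  define m where "m = x + 1 / 2"
  text \<open>\<open>k t\<close> is the trapezoidal-rule error of \<open>\<lambda>u. u powr r\<close> on \<open>[m - t, m + t]\<close>, corrected by a cubic
    term so that it vanishes at both \<open>0\<close> and \<open>1/2\<close>; a critical point of \<open>k\<close> then ties \<open>E\<close> to
    a value of its second derivative.\<close>
  define k where
    "k t = 1 / (r + 1) * ((m + t) powr (r + 1) - (m - t) powr (r + 1))
       - t * ((m - t) powr r + (m + t) powr r) - 8 * E * t ^ 3" for t :: real
  define D where
    "D t = - t * (r * (m + t) powr (r - 1) - r * (m - t) powr (r - 1)) - 24 * E * t\<^sup>2" for t :: real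
  have "(k has_real_derivative D t) (at t)" if "0 \<le> t" "t \<le> 1 / 2" for t
  proof -
    have "m - t > 0" "m + t > 0" "r + 1 \<noteq> 0" using that assms by (auto simp: m_def)
    then show ?thesis unfolding k_def D_def
      by (auto intro!: derivative_eq_intros DERIV_fun_powr simp: add_divide_distrib)
  qed
  then obtain z where z: "0 < z" "z < 1 / 2" and "k (1 / 2) - k 0 = (1 / 2 - 0) * D z"
    using MVT2[of 0 "1/2" k D] by auto
  moreover have "k 0 = 0" "k (1 / 2) = 0"
    unfolding k_def E_def m_def by (simp_all add: algebra_simps power_divide)
  ultimately have Dz: "D z = 0" by simp
  obtain \<eta> where \<eta>: "m - z < \<eta>" "\<eta> < m + z"
    and d\<eta>: "(m + z) powr (r - 1) - (m - z) powr (r - 1) = 2 * z * ((r - 1) * \<eta> powr (r - 2))"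
    using powr_mean_value[of "m - z" "m + z" "r - 1"] z assms by (auto simp: m_def diff_diff_eq)
  have "D z = - 2 * z\<^sup>2 * (r * (r - 1) * \<eta> powr (r - 2) + 12 * E)"
  proof -
    have "D z = - z * r * ((m + z) powr (r - 1) - (m - z) powr (r - 1)) - 24 * E * z\<^sup>2"
      by (simp add: D_def algebra_simps)
    then show ?thesis by (simp add: d\<eta> algebra_simps power2_eq_square)
  qed
  with Dz z have "E = - (r * (r - 1) / 12) * \<eta> powr (r - 2)"
    by simp
  moreover have "x < \<eta>" "\<eta> < x + 1"
    using \<eta> z by (auto simp: m_def)
  ultimately show ?thesis
    unfolding E_def by (intro that[of \<eta>])
qed

lemma divide_powr_strict_antimono_bounds:
  fixes x z y c e :: real
  assumes "0 < x" "x < z" "z < y" "0 < c" "0 < e"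
  shows "c / y powr e < c / z powr e \<and> c / z powr e < c / x powr e"
proof -
  have "x powr e < z powr e" "z powr e < y powr e"
    using assms by (auto intro: powr_less_mono2)
  then show ?thesis
    using assms by (auto intro!: divide_strict_left_mono)
qed

lemma a_coef_bounds:
  fixes \<alpha> :: real and s :: nat
  assumes "0 < \<alpha>" "\<alpha> < 1" "0 < s"
  shows "(1 - \<alpha>) / (real s + 1) powr \<alpha> < a_coef \<alpha> s \<and> a_coef \<alpha> s < (1 - \<alpha>) / (real s) powr \<alpha>"
proof -
  obtain z where z: "real s < z" "z < real s + 1"
    and "(real s + 1) powr (1 - \<alpha>) - real s powr (1 - \<alpha>) = 1 * ((1 - \<alpha>) * z powr (- \<alpha>))"
    using powr_mean_value[of "real s" "real s + 1" "1 - \<alpha>"] assms by auto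
  then have "a_coef \<alpha> s = (1 - \<alpha>) / z powr \<alpha>"
    by (simp add: a_coef_def powr_minus_divide)
  then show ?thesis
    using divide_powr_strict_antimono_bounds[of "real s" z "real s + 1" "1 - \<alpha>" \<alpha>] z assms by simp
qed

lemma a_coef_diff_bounds:
  fixes \<alpha> :: real and s :: nat
  assumes "0 < \<alpha>" "\<alpha> < 1" "0 < s"
  shows "\<alpha> * (1 - \<alpha>) / (real s + 2) powr (\<alpha> + 1) < a_coef \<alpha> s - a_coef \<alpha> (s + 1)
       \<and> a_coef \<alpha> s - a_coef \<alpha> (s + 1) < \<alpha> * (1 - \<alpha>) / (real s) powr (\<alpha> + 1)"
proof -
  obtain w where w: "real s < w" "w < real s + 2"
    and second_diff: "(real s + 2) powr (1 - \<alpha>) - 2 * (real s + 1) powr (1 - \<alpha>) + real s powr (1 - \<alpha>)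
      = (1 - \<alpha>) * (1 - \<alpha> - 1) * w powr (1 - \<alpha> - 2)"
    using powr_second_difference[of "real s" "1 - \<alpha>"] assms by auto
  have "a_coef \<alpha> s - a_coef \<alpha> (s + 1)
      = - ((real s + 2) powr (1 - \<alpha>) - 2 * (real s + 1) powr (1 - \<alpha>) + real s powr (1 - \<alpha>))"
    by (simp add: a_coef_def algebra_simps)
  also have "\<dots> = \<alpha> * (1 - \<alpha>) * w powr (- (\<alpha> + 1))"
    unfolding second_diff by (simp add: algebra_simps)
  finally have "a_coef \<alpha> s - a_coef \<alpha> (s + 1) = \<alpha> * (1 - \<alpha>) / w powr (\<alpha> + 1)"
    by (simp add: powr_minus_divide[of w "\<alpha> + 1"] del: minus_add_distrib)
  then show ?thesis
    using divide_powr_strict_antimono_bounds[of "real s" w "real s + 2" "\<alpha> * (1 - \<alpha>)" "\<alpha> + 1"]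
      w assms by simp
qed

lemma b_coef_bounds:
  fixes \<alpha> :: real and s :: nat
  assumes "0 < \<alpha>" "\<alpha> < 1" "0 < s"
  shows "\<alpha> * (1 - \<alpha>) / (12 * (real s + 1) powr (\<alpha> + 1)) < b_coef \<alpha> s
       \<and> b_coef \<alpha> s < \<alpha> * (1 - \<alpha>) / (12 * (real s) powr (\<alpha> + 1))"
proof -
  obtain \<eta> where \<eta>: "real s < \<eta>" "\<eta> < real s + 1"
    and trapezoid: "1 / (1 - \<alpha> + 1) * ((real s + 1) powr (1 - \<alpha> + 1) - real s powr (1 - \<alpha> + 1))
        - 1 / 2 * ((real s + 1) powr (1 - \<alpha>) + real s powr (1 - \<alpha>))
      = - ((1 - \<alpha>) * (1 - \<alpha> - 1) / 12) * \<eta> powr (1 - \<alpha> - 2)"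
    using powr_trapezoid_error[of "real s" "1 - \<alpha>"] assms by auto
  have "b_coef \<alpha> s = - ((1 - \<alpha>) * (1 - \<alpha> - 1) / 12) * \<eta> powr (1 - \<alpha> - 2)"
    unfolding trapezoid[symmetric] b_coef_def by (simp add: algebra_simps)
  also have "\<dots> = \<alpha> * (1 - \<alpha>) / 12 * \<eta> powr (- (\<alpha> + 1))"
    by (simp add: field_simps)
  finally have "b_coef \<alpha> s = \<alpha> * (1 - \<alpha>) / 12 / \<eta> powr (\<alpha> + 1)"
    by (simp add: powr_minus_divide[of \<eta> "\<alpha> + 1"] del: minus_add_distrib)
  then show ?thesis
    using divide_powr_strict_antimono_bounds[of "real s" \<eta> "real s + 1" "\<alpha> * (1 - \<alpha>) / 12" "\<alpha> + 1"]
      \<eta> assms by simp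
qed

theorem lemma2:
  fixes \<alpha> :: real and s :: nat
  assumes "0 < \<alpha>" "\<alpha> < 1" "1 \<le> s"
  shows "(1 - \<alpha>) / (real s + 1) powr \<alpha> < a_coef \<alpha> s
       \<and> a_coef \<alpha> s < (1 - \<alpha>) / (real s) powr \<alpha>
       \<and> \<alpha> * (1 - \<alpha>) / (real s + 2) powr (\<alpha> + 1) < a_coef \<alpha> s - a_coef \<alpha> (s + 1)
       \<and> a_coef \<alpha> s - a_coef \<alpha> (s + 1) < \<alpha> * (1 - \<alpha>) / (real s) powr (\<alpha> + 1)
       \<and> \<alpha> * (1 - \<alpha>) / (12 * (real s + 1) powr (\<alpha> + 1)) < b_coef \<alpha> s
       \<and> b_coef \<alpha> s < \<alpha> * (1 - \<alpha>) / (12 * (real s) powr (\<alpha> + 1))"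
proof -
  have "0 < s" using assms(3) by simp
  then show ?thesis
    using a_coef_bounds a_coef_diff_bounds b_coef_bounds assms(1,2) by blast
qed

end
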